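(* Let $p,k$ be integers with $k\ge 2$ and $p\ge 2k$, and let $G=J(p,k)$ be the Johnson graph, with $n$ vertices and $m$ edges. Let $\mu_1\ge\cdots\ge\mu_n$ be the eigenvalues of the adjacency matrix of $G$, let $n^+$ be the number of positive eigenvalues, let $\omega=\omega(G)$ be the clique number of $G$, and let $\ell=\min(n^+,\omega)$. Then \[ \mu_1^2+\mu_2^2+\cdots+\mu_\ell^2\le \frac{2m(\omega-1)}{\omega}. \]
   Context: The Johnson graph $J(p,k)$ has as vertices the $k$-element subsets of a $p$-element set, two vertices being adjacent if and only if their intersection has exactly $k-1$ elements. Eigenvalues are those of the adjacency matrix. *)

theory Defs
  imports "Jordan_Normal_Form.Char_Poly" "HOL-Library.Multiset"
begin

definition adj_matrix :: "'a set \<Rightarrow> ('a \<Rightarrow> 'a \<Rightarrow> bool) \<Rightarrow> real mat" where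
  "adj_matrix V E =
     (let vs = (SOME vs. distinct vs \<and> set vs = V)
      in mat (length vs) (length vs) (\<lambda>(i, j). if E (vs ! i) (vs ! j) then 1 else 0))"

text \<open>Eigenvalues with (algebraic) multiplicity, listed in non-increasing order:
  the real roots of the characteristic polynomial (for a real symmetric matrix these are all
  the eigenvalues).\<close>
definition eigenvalues_desc :: "real mat \<Rightarrow> real list" where
  "eigenvalues_desc A = rev (sorted_list_of_multiset (proots (char_poly A)))"

definition num_edges :: "'a set \<Rightarrow> ('a \<Rightarrow> 'a \<Rightarrow> bool) \<Rightarrow> nat" where
  "num_edges V E = card {{u, v} | u v. u \<in> V \<and> v \<in> V \<and> u \<noteq> v \<and> E u v}"

definition is_clique :: "'a set \<Rightarrow> ('a \<Rightarrow> 'a \<Rightarrow> bool) \<Rightarrow> 'a set \<Rightarrow> bool" where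
  "is_clique V E C \<longleftrightarrow> C \<subseteq> V \<and> (\<forall>x\<in>C. \<forall>y\<in>C. x \<noteq> y \<longrightarrow> E x y)"

definition clique_number :: "'a set \<Rightarrow> ('a \<Rightarrow> 'a \<Rightarrow> bool) \<Rightarrow> nat" where
  "clique_number V E = Max (card ` {C. is_clique V E C})"

definition johnson_vertices :: "nat \<Rightarrow> nat \<Rightarrow> nat set set" where
  "johnson_vertices p k = {S. S \<subseteq> {0..<p} \<and> card S = k}"

definition johnson_adj :: "nat \<Rightarrow> nat set \<Rightarrow> nat set \<Rightarrow> bool" where
  "johnson_adj k S T \<longleftrightarrow> card (S \<inter> T) = k - 1"

end

theory Submission
  imports Defs
begin

text \<open>\<open>J(p,k)\<close> is \<open>d\<close>-regular with \<open>d = k(p-k)\<close>, and on functions with zero sum its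
  adjacency form is at most \<open>\<theta> = d - p\<close> times the squared norm. This is proved for all \<open>J(p,j)\<close>
  by induction on \<open>j\<close>, writing the form through the maps that sum a function on \<open>j\<close>-sets over
  the supersets of a \<open>(j-1)\<close>-set and back. For a symmetric matrix with constant row sums \<open>d\<close>,
  such a bound with \<open>\<theta> < d\<close> makes \<open>d\<close> a simple eigenvalue and every other eigenvalue at most
  \<open>\<theta>\<close>, so the left-hand side is at most \<open>d\<^sup>2 + (\<omega> - 1)\<theta>\<^sup>2\<close>. A clique of \<open>J(p,k)\<close> consists
  of \<open>k\<close>-sets through a common \<open>(k-1)\<close>-set or inside a common \<open>(k+1)\<close>-set, so
  \<open>\<omega> = p - k + 1\<close> for \<open>p \<ge> 2k\<close>, and what remains is a lower bound for \<open>p choose k\<close>,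
  obtained from \<open>p choose 3\<close> when \<open>k \<ge> 3\<close>.\<close>

section \<open>Counting in the Johnson scheme\<close>

lemma mem_johnson_vertices: "S \<in> johnson_vertices p j \<longleftrightarrow> S \<subseteq> {0..<p} \<and> card S = j"
  unfolding johnson_vertices_def by simp

lemma finite_johnson_vertices [simp]: "finite (johnson_vertices p j)"
  unfolding johnson_vertices_def by (rule finite_subset[of _ "Pow {0..<p}"]) auto

lemma card_johnson_vertices: "card (johnson_vertices p j) = p choose j"
  unfolding johnson_vertices_def using n_subsets[of "{0..<p}" j] by simp

lemma finite_of_mem_johnson_vertices: "S \<in> johnson_vertices p j \<Longrightarrow> finite S"
  unfolding johnson_vertices_def using finite_subset by auto

lemma johnson_vertices_0: "johnson_vertices p 0 = {{}}"
  using finite_subset[of _ "{0..<p}"] by (auto simp: johnson_vertices_def)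

lemma card_johnson_supersets:
  assumes X: "X \<subseteq> {0..<p}" "card X \<le> j"
  shows "card {S \<in> johnson_vertices p j. X \<subseteq> S} = (p - card X) choose (j - card X)"
proof -
  have fX: "finite X" using X finite_subset by blast
  have "bij_betw (\<lambda>S. S - X) {S \<in> johnson_vertices p j. X \<subseteq> S}
          {B. B \<subseteq> {0..<p} - X \<and> card B = j - card X}"
  proof (rule bij_betw_byWitness[where f' = "\<lambda>B. B \<union> X"])
    show "(\<lambda>B. B \<union> X) ` {B. B \<subseteq> {0..<p} - X \<and> card B = j - card X}
            \<subseteq> {S \<in> johnson_vertices p j. X \<subseteq> S}"
    proof (rule image_subsetI)
      fix B assume B: "B \<in> {B. B \<subseteq> {0..<p} - X \<and> card B = j - card X}"
      then have "finite B" using finite_subset by blast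
      then have "card (B \<union> X) = card B + card X" using B fX by (subst card_Un_disjoint) auto
      then show "B \<union> X \<in> {S \<in> johnson_vertices p j. X \<subseteq> S}" using B X
        by (auto simp: mem_johnson_vertices)
    qed
  qed (use fX in \<open>auto simp: mem_johnson_vertices card_Diff_subset\<close>)
  then have "card {S \<in> johnson_vertices p j. X \<subseteq> S} = card ({0..<p} - X) choose (j - card X)"
    by (simp add: bij_betw_same_card n_subsets)
  then show ?thesis using X fX by (simp add: card_Diff_subset)
qed

lemma card_Int_less_johnson:
  assumes "S \<in> johnson_vertices p j" "T \<in> johnson_vertices p j" "S \<noteq> T"
  shows "card (S \<inter> T) < j"
proof -
  have "finite S" "finite T" using assms finite_of_mem_johnson_vertices by blast+
  moreover have "S \<inter> T \<noteq> S" using assms card_subset_eq[of T S] \<open>finite T\<close>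
    by (auto simp: mem_johnson_vertices)
  ultimately show ?thesis using assms psubset_card_mono[of S "S \<inter> T"]
    by (auto simp: mem_johnson_vertices)
qed

text \<open>For \<open>j \<ge> 1\<close> this is \<^term>\<open>johnson_adj j\<close>; unlike \<^term>\<open>johnson_adj 0\<close>, in which
  \<open>k - 1\<close> truncates to \<open>0\<close>, it is irreflexive also for \<open>j = 0\<close>.\<close>
definition johnson_edge :: "nat \<Rightarrow> nat set \<Rightarrow> nat set \<Rightarrow> bool" where
  "johnson_edge j S T \<longleftrightarrow> card (S \<inter> T) + 1 = j"

lemma johnson_adj_eq_johnson_edge: "1 \<le> k \<Longrightarrow> johnson_adj k = johnson_edge k"
  unfolding johnson_adj_def johnson_edge_def by (auto simp: fun_eq_iff)

lemma johnson_edge_irrefl: "S \<in> johnson_vertices p j \<Longrightarrow> \<not> johnson_edge j S S"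
  by (simp add: johnson_edge_def mem_johnson_vertices)

lemma card_common_subsets_johnson:
  assumes S: "S \<in> johnson_vertices p j" and T: "T \<in> johnson_vertices p j" and "1 \<le> j"
  shows "card {R \<in> johnson_vertices p (j - 1). R \<subseteq> S \<and> R \<subseteq> T}
           = (if S = T then j else if johnson_edge j S T then 1 else 0)"
proof -
  have "finite (S \<inter> T)" using S finite_of_mem_johnson_vertices by blast
  moreover have "{R \<in> johnson_vertices p (j - 1). R \<subseteq> S \<and> R \<subseteq> T} = {R. R \<subseteq> S \<inter> T \<and> card R = j - 1}"
    using S T by (auto simp: mem_johnson_vertices)
  ultimately have count:
      "card {R \<in> johnson_vertices p (j - 1). R \<subseteq> S \<and> R \<subseteq> T} = card (S \<inter> T) choose (j - 1)"
    using n_subsets by metis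
  show ?thesis
  proof (cases "S = T")
    case True
    then have "card (S \<inter> T) = j" using S by (simp add: mem_johnson_vertices)
    then show ?thesis using count True \<open>1 \<le> j\<close> binomial_symmetric[of "j - 1" j] by simp
  next
    case False
    have less: "card (S \<inter> T) < j" by (rule card_Int_less_johnson[OF S T False])
    show ?thesis
    proof (cases "johnson_edge j S T")
      case True
      then have "card (S \<inter> T) = j - 1" by (simp add: johnson_edge_def)
      then show ?thesis using count False True by simp
    next
      case nonadjacent: False
      then have "card (S \<inter> T) < j - 1" using less by (simp add: johnson_edge_def)
      then show ?thesis using count False nonadjacent by (simp add: binomial_eq_0)
    qed
  qed
qed

lemma card_common_supersets_johnson:
  assumes R: "R \<in> johnson_vertices p (j - 1)" and R': "R' \<in> johnson_vertices p (j - 1)"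
    and j: "1 \<le> j" "j \<le> p"
  shows "card {S \<in> johnson_vertices p j. R \<subseteq> S \<and> R' \<subseteq> S}
           = (if R = R' then p + 1 - j else if johnson_edge (j - 1) R R' then 1 else 0)"
proof -
  have "finite R" "finite R'" using R R' finite_of_mem_johnson_vertices by blast+
  then have card_Un: "card (R \<union> R') + card (R \<inter> R') = 2 * (j - 1)"
    using card_Un_Int[of R R'] R R' by (simp add: mem_johnson_vertices)
  have sub: "R \<union> R' \<subseteq> {0..<p}" using R R' by (simp add: mem_johnson_vertices)
  have common: "{S \<in> johnson_vertices p j. R \<subseteq> S \<and> R' \<subseteq> S} = {S \<in> johnson_vertices p j. R \<union> R' \<subseteq> S}"
    by auto
  show ?thesis
  proof (cases "R = R'")
    case True
    then have "card (R \<union> R') = j - 1" using R by (simp add: mem_johnson_vertices)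
    then show ?thesis unfolding common using card_johnson_supersets[OF sub, of j] True j by simp
  next
    case False
    show ?thesis
    proof (cases "johnson_edge (j - 1) R R'")
      case True
      then have "card (R \<union> R') = j" using card_Un by (simp add: johnson_edge_def)
      then show ?thesis unfolding common using card_johnson_supersets[OF sub, of j] True False
        by simp
    next
      case nonadjacent: False
      then have big: "j < card (R \<union> R')"
        using card_Un card_Int_less_johnson[OF R R' False] by (simp add: johnson_edge_def)
      have "card (R \<union> R') \<le> j" if S: "S \<in> johnson_vertices p j" and "R \<union> R' \<subseteq> S" for S
        using card_mono[OF finite_of_mem_johnson_vertices[OF S] that(2)] S
        by (simp add: mem_johnson_vertices)
      then have "{S \<in> johnson_vertices p j. R \<union> R' \<subseteq> S} = {}" using big by fastforce
      then show ?thesis unfolding common using False nonadjacent by simp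
    qed
  qed
qed

lemma card_johnson_neighbours:
  assumes S: "S \<in> johnson_vertices p k" and k: "1 \<le> k" "k \<le> p"
  shows "card {T \<in> johnson_vertices p k. johnson_edge k S T} = k * (p - k)"
proof -
  let ?V = "johnson_vertices p k" and ?W = "johnson_vertices p (k - 1)"
  have "(\<Sum>T\<in>?V. card {R \<in> ?W. R \<subseteq> S \<and> R \<subseteq> T})
          = (\<Sum>T\<in>?V. (if T = S then k else 0) + (if johnson_edge k S T then 1 else 0))"
    using card_common_subsets_johnson[OF S _ k(1)] johnson_edge_irrefl[OF S]
    by (intro sum.cong refl) auto
  also have "\<dots> = k + card {T \<in> ?V. johnson_edge k S T}"
    using S by (simp add: sum.distrib sum.If_cases Int_def)
  finally have by_neighbours: "(\<Sum>T\<in>?V. card {R \<in> ?W. R \<subseteq> S \<and> R \<subseteq> T})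
      = k + card {T \<in> ?V. johnson_edge k S T}" .
  have "(\<Sum>T\<in>?V. card {R \<in> ?W. R \<subseteq> S \<and> R \<subseteq> T})
          = (\<Sum>T\<in>?V. \<Sum>R\<in>?W. if R \<subseteq> S \<and> R \<subseteq> T then 1 else 0)"
    by (simp add: sum.If_cases Int_def)
  also have "\<dots> = (\<Sum>R\<in>?W. if R \<subseteq> S then card {T \<in> ?V. R \<subseteq> T} else 0)"
    by (subst sum.swap) (intro sum.cong refl, simp add: sum.If_cases Int_def)
  also have "\<dots> = (\<Sum>R\<in>?W. if R \<subseteq> S then p + 1 - k else 0)"
  proof (intro sum.cong refl)
    fix R assume R: "R \<in> ?W"
    show "(if R \<subseteq> S then card {T \<in> ?V. R \<subseteq> T} else 0) = (if R \<subseteq> S then p + 1 - k else 0)"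
      using card_common_supersets_johnson[OF R R k] by simp
  qed
  also have "\<dots> = (p + 1 - k) * card {R \<in> ?W. R \<subseteq> S \<and> R \<subseteq> S}"
    by (simp add: sum.If_cases Int_def)
  also have "\<dots> = (p + 1 - k) * k" using card_common_subsets_johnson[OF S S k(1)] by simp
  finally show ?thesis using by_neighbours k by (simp add: algebra_simps diff_mult_distrib2)
qed

section \<open>The adjacency form of \<open>J(p,j)\<close> on functions with zero sum\<close>

definition adj_form :: "'a set \<Rightarrow> ('a \<Rightarrow> 'a \<Rightarrow> bool) \<Rightarrow> ('a \<Rightarrow> real) \<Rightarrow> real" where
  "adj_form V E f = (\<Sum>x\<in>V. \<Sum>y\<in>V. if E x y then f x * f y else 0)"

lemma sum_square_incidence:
  fixes v :: "'a \<Rightarrow> real" and I :: "'a \<Rightarrow> 'b \<Rightarrow> bool"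
  assumes "finite A" "finite B"
    and common: "\<And>a a'. a \<in> A \<Longrightarrow> a' \<in> A \<Longrightarrow>
      card {b \<in> B. I a b \<and> I a' b} = (if a = a' then c else if E a a' then 1 else 0)"
    and irrefl: "\<And>a. a \<in> A \<Longrightarrow> \<not> E a a"
  shows "(\<Sum>b\<in>B. (\<Sum>a\<in>A. if I a b then v a else 0)^2)
           = c * (\<Sum>a\<in>A. (v a)^2) + adj_form A E v"
proof -
  have "(\<Sum>b\<in>B. (\<Sum>a\<in>A. if I a b then v a else 0)^2)
          = (\<Sum>b\<in>B. \<Sum>a\<in>A. \<Sum>a'\<in>A. if I a b \<and> I a' b then v a * v a' else 0)"
    unfolding power2_eq_square sum_product by (intro sum.cong refl) auto
  also have "\<dots> = (\<Sum>a\<in>A. \<Sum>a'\<in>A. \<Sum>b\<in>B. if I a b \<and> I a' b then v a * v a' else 0)"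
    by (subst sum.swap, subst (2) sum.swap, rule refl)
  also have "\<dots> = (\<Sum>a\<in>A. \<Sum>a'\<in>A. v a * v a' * card {b \<in> B. I a b \<and> I a' b})"
    using \<open>finite B\<close> by (simp add: sum.If_cases Int_def mult.commute)
  also have "\<dots> = (\<Sum>a\<in>A. \<Sum>a'\<in>A.
      (if a = a' then c * (v a)^2 else 0) + (if E a a' then v a * v a' else 0))"
    using irrefl by (intro sum.cong refl) (auto simp: common power2_eq_square)
  also have "\<dots> = c * (\<Sum>a\<in>A. (v a)^2) + adj_form A E v"
    using assms(1) by (simp add: sum.distrib sum_distrib_left adj_form_def)
  finally show ?thesis .
qed

definition sum_supersets :: "nat \<Rightarrow> nat \<Rightarrow> (nat set \<Rightarrow> real) \<Rightarrow> nat set \<Rightarrow> real" where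
  "sum_supersets p j v R = (\<Sum>S\<in>johnson_vertices p j. if R \<subseteq> S then v S else 0)"

definition sum_subsets :: "nat \<Rightarrow> nat \<Rightarrow> (nat set \<Rightarrow> real) \<Rightarrow> nat set \<Rightarrow> real" where
  "sum_subsets p j u S = (\<Sum>R\<in>johnson_vertices p (j - 1). if R \<subseteq> S then u R else 0)"

lemma sum_square_sum_supersets:
  assumes "1 \<le> j"
  shows "(\<Sum>R\<in>johnson_vertices p (j - 1). (sum_supersets p j v R)^2)
           = j * (\<Sum>S\<in>johnson_vertices p j. (v S)^2)
             + adj_form (johnson_vertices p j) (johnson_edge j) v"
  unfolding sum_supersets_def
proof (rule sum_square_incidence[where I = "\<lambda>S R. R \<subseteq> S"])
  fix S T assume "S \<in> johnson_vertices p j" "T \<in> johnson_vertices p j"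
  then show "card {R \<in> johnson_vertices p (j - 1). R \<subseteq> S \<and> R \<subseteq> T}
               = (if S = T then j else if johnson_edge j S T then 1 else 0)"
    by (rule card_common_subsets_johnson[OF _ _ assms])
qed (simp_all add: johnson_edge_irrefl)

lemma sum_square_sum_subsets:
  assumes "1 \<le> j" "j \<le> p"
  shows "(\<Sum>S\<in>johnson_vertices p j. (sum_subsets p j u S)^2)
           = real (p + 1 - j) * (\<Sum>R\<in>johnson_vertices p (j - 1). (u R)^2)
             + adj_form (johnson_vertices p (j - 1)) (johnson_edge (j - 1)) u"
  unfolding sum_subsets_def
proof (rule sum_square_incidence[where I = "\<lambda>R S. R \<subseteq> S"])
  fix R R' assume "R \<in> johnson_vertices p (j - 1)" "R' \<in> johnson_vertices p (j - 1)"
  then show "card {S \<in> johnson_vertices p j. R \<subseteq> S \<and> R' \<subseteq> S}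
               = (if R = R' then p + 1 - j else if johnson_edge (j - 1) R R' then 1 else 0)"
    by (rule card_common_supersets_johnson[OF _ _ assms])
qed (simp_all add: johnson_edge_irrefl)

lemma sum_mult_sum_subsets:
  "(\<Sum>S\<in>johnson_vertices p j. v S * sum_subsets p j u S)
     = (\<Sum>R\<in>johnson_vertices p (j - 1). u R * sum_supersets p j v R)"
  unfolding sum_subsets_def sum_supersets_def sum_distrib_left
  by (subst sum.swap) (intro sum.cong refl, auto)

lemma sum_sum_supersets:
  assumes "1 \<le> j"
  shows "(\<Sum>R\<in>johnson_vertices p (j - 1). sum_supersets p j v R)
           = j * (\<Sum>S\<in>johnson_vertices p j. v S)"
proof -
  have "(\<Sum>R\<in>johnson_vertices p (j - 1). sum_supersets p j v R)
          = (\<Sum>S\<in>johnson_vertices p j. v S * card {R \<in> johnson_vertices p (j - 1). R \<subseteq> S \<and> R \<subseteq> S})"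
    unfolding sum_supersets_def by (subst sum.swap) (simp add: sum.If_cases Int_def mult.commute)
  also have "\<dots> = (\<Sum>S\<in>johnson_vertices p j. j * v S)"
  proof (intro sum.cong refl)
    fix S assume S: "S \<in> johnson_vertices p j"
    show "v S * card {R \<in> johnson_vertices p (j - 1). R \<subseteq> S \<and> R \<subseteq> S} = j * v S"
      using card_common_subsets_johnson[OF S S assms] by simp
  qed
  finally show ?thesis by (simp add: sum_distrib_left)
qed

lemma sum_mult_le_of_sum_square_le:
  fixes f g :: "'a \<Rightarrow> real"
  assumes "finite A" "0 \<le> C" and g: "(\<Sum>x\<in>A. (g x)^2) \<le> C * (\<Sum>x\<in>A. f x * g x)"
  shows "(\<Sum>x\<in>A. f x * g x) \<le> C * (\<Sum>x\<in>A. (f x)^2)"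
proof (cases "C = 0")
  case True
  then have "\<forall>x\<in>A. (g x)^2 = 0"
    using g sum_nonneg_eq_0_iff[OF \<open>finite A\<close>, of "\<lambda>x. (g x)^2"]
    by (simp add: order_antisym sum_nonneg)
  then show ?thesis using True by simp
next
  case False
  have "0 \<le> (\<Sum>x\<in>A. (C * f x - g x)^2)" by (intro sum_nonneg) auto
  also have "\<dots> = C^2 * (\<Sum>x\<in>A. (f x)^2) - 2 * C * (\<Sum>x\<in>A. f x * g x) + (\<Sum>x\<in>A. (g x)^2)"
    by (simp add: power2_diff sum.distrib sum_subtractf sum_distrib_left algebra_simps)
  finally have "C * (\<Sum>x\<in>A. f x * g x) \<le> C * (C * (\<Sum>x\<in>A. (f x)^2))"
    using g by (simp add: power2_eq_square algebra_simps)
  then show ?thesis using False \<open>0 \<le> C\<close> by simp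
qed

text \<open>For \<open>u = sum_supersets p (j+1) v\<close> and \<open>w = sum_subsets p (j+1) u\<close> the
  identities above express \<open>\<parallel>u\<parallel>\<^sup>2\<close> through the form of \<open>v\<close>, the induction hypothesis for \<open>u\<close>
  gives \<open>\<parallel>w\<parallel>\<^sup>2 \<le> C \<parallel>u\<parallel>\<^sup>2\<close>, and \<open>\<parallel>u\<parallel>\<^sup>2 = \<langle>v, w\<rangle>\<close>; hence \<open>\<parallel>u\<parallel>\<^sup>2 \<le> C \<parallel>v\<parallel>\<^sup>2\<close>.\<close>
lemma adj_form_johnson_le:
  assumes "j \<le> p" "(\<Sum>S\<in>johnson_vertices p j. v S) = 0"
  shows "adj_form (johnson_vertices p j) (johnson_edge j) v
           \<le> (real j * (real p - real j) - real p) * (\<Sum>S\<in>johnson_vertices p j. (v S)^2)"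
  using assms
proof (induction j arbitrary: v)
  case 0
  then show ?case by (simp add: johnson_vertices_0 adj_form_def johnson_edge_def)
next
  case (Suc j)
  let ?V = "johnson_vertices p (Suc j)" and ?W = "johnson_vertices p j"
  define u where "u = sum_supersets p (Suc j) v"
  define w where "w = sum_subsets p (Suc j) u"
  define X where "X = (\<Sum>R\<in>?W. (u R)^2)"
  define C where "C = real j * (real p - real j - 1)"
  have "(\<Sum>R\<in>?W. u R) = 0"
    using sum_sum_supersets[of "Suc j" p v] Suc.prems unfolding u_def by simp
  then have IH: "adj_form ?W (johnson_edge j) u \<le> (real j * (real p - real j) - real p) * X"
    using Suc.IH Suc.prems unfolding X_def by simp
  have X: "X = Suc j * (\<Sum>S\<in>?V. (v S)^2) + adj_form ?V (johnson_edge (Suc j)) v"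
    unfolding X_def u_def using sum_square_sum_supersets[of "Suc j" p v] by simp
  have "(\<Sum>S\<in>?V. (w S)^2) = (real p - real j) * X + adj_form ?W (johnson_edge j) u"
    unfolding w_def X_def using sum_square_sum_subsets[of "Suc j" p u] Suc.prems by simp
  also have "\<dots> \<le> C * X" using IH unfolding C_def by (simp add: algebra_simps)
  also have X_inner: "X = (\<Sum>S\<in>?V. v S * w S)"
    unfolding X_def w_def sum_mult_sum_subsets u_def by (simp add: power2_eq_square)
  finally have "X \<le> C * (\<Sum>S\<in>?V. (v S)^2)"
    using sum_mult_le_of_sum_square_le[of ?V C w v] Suc.prems X_inner unfolding C_def by simp
  then show ?case using X unfolding C_def by (simp add: algebra_simps)
qed

section \<open>Symmetric matrices with constant row sums and a spectral gap\<close>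

lemma char_poly_nonzero: "A \<in> carrier_mat n n \<Longrightarrow> char_poly A \<noteq> 0"
  using degree_monic_char_poly[of A n] by auto

lemma index_mult_mat_square:
  assumes "X \<in> carrier_mat n n" "Y \<in> carrier_mat n n" "i < n" "j < n"
  shows "(X * Y) $$ (i, j) = (\<Sum>k\<in>{0..<n}. X $$ (i, k) * Y $$ (k, j))"
  using assms by (simp add: scalar_prod_def)

text \<open>The columns of \<open>ones_basis_mat n\<close> are the all-ones vector and \<open>e\<^sub>1, \<dots>, e\<^sub>n\<^sub>-\<^sub>1\<close>.\<close>
definition ones_basis_mat :: "nat \<Rightarrow> 'a::comm_ring_1 mat" where
  "ones_basis_mat n = mat n n (\<lambda>(i, j). if i = j \<or> j = 0 then 1 else 0)"

definition ones_basis_mat_inv :: "nat \<Rightarrow> 'a::comm_ring_1 mat" where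
  "ones_basis_mat_inv n = mat n n (\<lambda>(i, j). if i = j then 1 else if j = 0 then - 1 else 0)"

lemma ones_basis_mat_carrier: "ones_basis_mat n \<in> carrier_mat n n"
  by (simp add: ones_basis_mat_def)

lemma ones_basis_mat_inv_carrier: "ones_basis_mat_inv n \<in> carrier_mat n n"
  by (simp add: ones_basis_mat_inv_def)

lemma sum_ones_basis_mat_left:
  fixes g :: "nat \<Rightarrow> 'a::comm_ring_1"
  assumes "i < n"
  shows "(\<Sum>k\<in>{0..<n}. ones_basis_mat n $$ (i, k) * g k) = g i + (if i = 0 then 0 else g 0)"
proof -
  have "(\<Sum>k\<in>{0..<n}. ones_basis_mat n $$ (i, k) * g k)
          = (\<Sum>k\<in>{0..<n}. (if i = k then g k else 0) + (if k = 0 \<and> i \<noteq> 0 then g k else 0))"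
    using assms by (intro sum.cong refl) (auto simp: ones_basis_mat_def)
  then show ?thesis using assms by (simp add: sum.distrib)
qed

lemma sum_ones_basis_mat_inv_left:
  fixes g :: "nat \<Rightarrow> 'a::comm_ring_1"
  assumes "i < n"
  shows "(\<Sum>k\<in>{0..<n}. ones_basis_mat_inv n $$ (i, k) * g k) = g i - (if i = 0 then 0 else g 0)"
proof -
  have "(\<Sum>k\<in>{0..<n}. ones_basis_mat_inv n $$ (i, k) * g k)
          = (\<Sum>k\<in>{0..<n}. (if i = k then g k else 0) - (if k = 0 \<and> i \<noteq> 0 then g k else 0))"
    using assms by (intro sum.cong refl) (auto simp: ones_basis_mat_inv_def)
  then show ?thesis using assms by (simp add: sum_subtractf)
qed

lemma sum_ones_basis_mat_right:
  fixes g :: "nat \<Rightarrow> 'a::comm_ring_1"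
  assumes "j < n"
  shows "(\<Sum>k\<in>{0..<n}. g k * ones_basis_mat n $$ (k, j)) = (if j = 0 then (\<Sum>k\<in>{0..<n}. g k) else g j)"
proof -
  have "(\<Sum>k\<in>{0..<n}. g k * ones_basis_mat n $$ (k, j)) = (\<Sum>k\<in>{0..<n}. if j = 0 \<or> k = j then g k else 0)"
    using assms by (intro sum.cong refl) (auto simp: ones_basis_mat_def)
  then show ?thesis using assms by auto
qed

lemma ones_basis_mat_mult_inv:
  "ones_basis_mat n * ones_basis_mat_inv n = (1\<^sub>m n :: 'a::comm_ring_1 mat)"
proof (rule eq_matI)
  fix i j assume "i < dim_row (1\<^sub>m n :: 'a mat)" "j < dim_col (1\<^sub>m n :: 'a mat)"
  then have ij: "i < n" "j < n" by auto
  show "(ones_basis_mat n * ones_basis_mat_inv n) $$ (i, j) = (1\<^sub>m n :: 'a mat) $$ (i, j)"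
    unfolding index_mult_mat_square[OF ones_basis_mat_carrier ones_basis_mat_inv_carrier ij]
      sum_ones_basis_mat_left[OF ij(1)]
    using ij by (auto simp: ones_basis_mat_def ones_basis_mat_inv_def)
qed (simp_all add: ones_basis_mat_def ones_basis_mat_inv_def)

lemma ones_basis_mat_inv_mult:
  "ones_basis_mat_inv n * ones_basis_mat n = (1\<^sub>m n :: 'a::comm_ring_1 mat)"
proof (rule eq_matI)
  fix i j assume "i < dim_row (1\<^sub>m n :: 'a mat)" "j < dim_col (1\<^sub>m n :: 'a mat)"
  then have ij: "i < n" "j < n" by auto
  show "(ones_basis_mat_inv n * ones_basis_mat n) $$ (i, j) = (1\<^sub>m n :: 'a mat) $$ (i, j)"
    unfolding index_mult_mat_square[OF ones_basis_mat_inv_carrier ones_basis_mat_carrier ij]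
      sum_ones_basis_mat_inv_left[OF ij(1)]
    using ij by (auto simp: ones_basis_mat_def ones_basis_mat_inv_def)
qed (simp_all add: ones_basis_mat_def ones_basis_mat_inv_def)

text \<open>The matrix of \<open>A\<close> on the quotient by the all-ones vector, in the basis
  \<open>e\<^sub>1, \<dots>, e\<^sub>n\<^sub>-\<^sub>1\<close>.\<close>
definition row_sum_deflation :: "'a::comm_ring_1 mat \<Rightarrow> 'a mat" where
  "row_sum_deflation A =
     mat (dim_row A - 1) (dim_row A - 1) (\<lambda>(i, j). A $$ (Suc i, Suc j) - A $$ (0, Suc j))"

lemma similar_mat_row_sum_block:
  fixes A :: "'a::comm_ring_1 mat"
  assumes A: "A \<in> carrier_mat n n" and n: "0 < n"
    and rows: "\<And>i. i < n \<Longrightarrow> (\<Sum>j<n. A $$ (i, j)) = d"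
  shows "similar_mat A (four_block_mat (mat 1 1 (\<lambda>_. d)) (mat 1 (n - 1) (\<lambda>(_, j). A $$ (0, Suc j)))
                          (0\<^sub>m (n - 1) 1) (row_sum_deflation A))"
    (is "similar_mat A ?C")
proof -
  let ?P = "ones_basis_mat n :: 'a mat" and ?Q = "ones_basis_mat_inv n :: 'a mat"
  note P = ones_basis_mat_carrier[of n] and Q = ones_basis_mat_inv_carrier[of n]
  have C: "?C \<in> carrier_mat n n" using A n by (auto simp: row_sum_deflation_def)
  have C_entry: "?C $$ (i, j) = (if j = 0 then (if i = 0 then d else 0)
      else if i = 0 then A $$ (0, j) else A $$ (i, j) - A $$ (0, j))" if "i < n" "j < n" for i j
    using that A n by (auto simp: row_sum_deflation_def)
  have AP: "A * ?P = ?P * ?C"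
  proof (rule eq_matI)
    fix i j assume "i < dim_row (?P * ?C)" "j < dim_col (?P * ?C)"
    then have ij: "i < n" "j < n" using C by (auto simp: ones_basis_mat_def)
    have "(A * ?P) $$ (i, j) = (if j = 0 then d else A $$ (i, j))"
      using index_mult_mat_square[OF A P ij] sum_ones_basis_mat_right[OF ij(2), of "\<lambda>k. A $$ (i, k)"]
        rows[OF ij(1)]
      by (simp add: lessThan_atLeast0)
    also have "\<dots> = ?C $$ (i, j) + (if i = 0 then 0 else ?C $$ (0, j))"
      unfolding C_entry[OF ij] C_entry[OF n ij(2)] by simp
    also have "\<dots> = (?P * ?C) $$ (i, j)"
      unfolding index_mult_mat_square[OF P C ij]
      by (rule sum_ones_basis_mat_left[symmetric, OF ij(1)])
    finally show "(A * ?P) $$ (i, j) = (?P * ?C) $$ (i, j)" .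
  qed (use A C in \<open>auto simp: ones_basis_mat_def\<close>)
  have "A = ?P * ?C * ?Q"
    using A P Q C AP ones_basis_mat_mult_inv by (metis assoc_mult_mat right_mult_one_mat)
  then show ?thesis
    unfolding similar_mat_def similar_mat_wit_def Let_def
    using A P Q C ones_basis_mat_mult_inv ones_basis_mat_inv_mult
    by (intro exI[of _ ?P] exI[of _ ?Q]) auto
qed

lemma char_poly_row_sum_deflation:
  fixes A :: "'a::comm_ring_1 mat"
  assumes A: "A \<in> carrier_mat n n" and n: "0 < n"
    and rows: "\<And>i. i < n \<Longrightarrow> (\<Sum>j<n. A $$ (i, j)) = d"
  shows "char_poly A = [:-d, 1:] * char_poly (row_sum_deflation A)"
proof -
  have "char_poly (mat 1 1 (\<lambda>_. d)) = [:-d, 1:]"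
    using char_poly_upper_triangular[of "mat 1 1 (\<lambda>_. d)" 1]
    by (simp add: upper_triangular_def diag_mat_def)
  moreover have "row_sum_deflation A \<in> carrier_mat (n - 1) (n - 1)"
    using A by (simp add: row_sum_deflation_def)
  ultimately show ?thesis
    using char_poly_similar[OF similar_mat_row_sum_block[OF assms]]
      char_poly_four_block_zeros_col[of "mat 1 1 (\<lambda>_. d)" "mat 1 (n - 1) (\<lambda>(_, j). A $$ (0, Suc j))"]
    by simp
qed

lemma row_sum_deflation_eigen_lift:
  fixes A :: "'a::comm_ring_1 mat"
  assumes A: "A \<in> carrier_mat n n" and z0: "z 0 = 0"
    and eigen: "\<And>a. a < n - 1 \<Longrightarrow> (\<Sum>b<n - 1. row_sum_deflation A $$ (a, b) * z (Suc b)) = \<mu> * z (Suc a)"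
    and i: "i < n"
  shows "(\<Sum>j<n. A $$ (i, j) * z j) = \<mu> * z i + (\<Sum>j<n. A $$ (0, j) * z j)"
proof (cases i)
  case (Suc a)
  have n: "n = Suc (n - 1)" using i by simp
  have "(\<Sum>j<n. A $$ (i, j) * z j) - (\<Sum>j<n. A $$ (0, j) * z j)
          = (\<Sum>j<n. (A $$ (i, j) - A $$ (0, j)) * z j)"
    by (simp add: sum_subtractf algebra_simps)
  also have "\<dots> = (\<Sum>b<n - 1. (A $$ (i, Suc b) - A $$ (0, Suc b)) * z (Suc b))"
    by (subst n, subst sum.lessThan_Suc_shift) (simp add: z0)
  also have "\<dots> = (\<Sum>b<n - 1. row_sum_deflation A $$ (a, b) * z (Suc b))"
    using A i Suc by (intro sum.cong refl) (simp add: row_sum_deflation_def)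
  also have "\<dots> = \<mu> * z i" using eigen[of a] i Suc by simp
  finally show ?thesis by (simp add: algebra_simps)
qed (simp add: z0)

lemma char_poly_root_eigenfunction:
  fixes A :: "'a::field mat"
  assumes A: "A \<in> carrier_mat n n" and root: "poly (char_poly A) \<mu> = 0"
  obtains x i0 where "i0 < n" "x i0 \<noteq> 0" "\<And>i. i < n \<Longrightarrow> (\<Sum>j<n. A $$ (i, j) * x j) = \<mu> * x i"
proof -
  obtain v where v: "v \<in> carrier_vec n" "v \<noteq> 0\<^sub>v n" "A *\<^sub>v v = \<mu> \<cdot>\<^sub>v v"
    using root eigenvalue_root_char_poly[OF A] A unfolding eigenvalue_def eigenvector_def by auto
  then obtain i0 where "i0 < n" "v $ i0 \<noteq> 0" by (metis carrier_vecD eq_vecI index_zero_vec)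
  moreover have "(\<Sum>j<n. A $$ (i, j) * v $ j) = \<mu> * v $ i" if "i < n" for i
  proof -
    have "(A *\<^sub>v v) $ i = (\<Sum>j<n. A $$ (i, j) * v $ j)"
      using that A v(1) by (auto simp: scalar_prod_def lessThan_atLeast0)
    then show ?thesis using v(1,3) that by simp
  qed
  ultimately show ?thesis using that by blast
qed

locale spectral_gap_mat =
  fixes A :: "real mat" and n :: nat and d \<theta> :: real
  assumes carrier: "A \<in> carrier_mat n n" and nonempty: "0 < n"
    and symmetric: "\<And>i j. i < n \<Longrightarrow> j < n \<Longrightarrow> A $$ (i, j) = A $$ (j, i)"
    and row_sum: "\<And>i. i < n \<Longrightarrow> (\<Sum>j<n. A $$ (i, j)) = d"
    and gap: "\<And>x. (\<Sum>i<n. x i) = 0 \<Longrightarrow>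
      (\<Sum>i<n. \<Sum>j<n. A $$ (i, j) * x i * x j) \<le> \<theta> * (\<Sum>i<n. (x i)^2)"
    and gap_less: "\<theta> < d"
begin

lemma sum_mult_column: "(\<Sum>i<n. \<Sum>j<n. A $$ (i, j) * x j) = d * (\<Sum>j<n. x j)"
proof -
  have "(\<Sum>i<n. \<Sum>j<n. A $$ (i, j) * x j) = (\<Sum>j<n. x j * (\<Sum>i<n. A $$ (j, i)))"
    by (subst sum.swap) (simp add: sum_distrib_left symmetric mult.commute)
  then show ?thesis by (simp add: row_sum sum_distrib_left mult.commute)
qed

lemma quadratic_eigen:
  assumes "\<And>i. i < n \<Longrightarrow> (\<Sum>j<n. A $$ (i, j) * x j) = \<mu> * x i"
  shows "(\<Sum>i<n. \<Sum>j<n. A $$ (i, j) * x i * x j) = \<mu> * (\<Sum>i<n. (x i)^2)"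
proof -
  have "(\<Sum>i<n. \<Sum>j<n. A $$ (i, j) * x i * x j) = (\<Sum>i<n. x i * (\<Sum>j<n. A $$ (i, j) * x j))"
    by (simp add: sum_distrib_left algebra_simps)
  also have "\<dots> = (\<Sum>i<n. \<mu> * (x i)^2)"
  proof (intro sum.cong refl)
    fix i assume "i \<in> {..<n}"
    then have "x i * (\<Sum>j<n. A $$ (i, j) * x j) = x i * (\<mu> * x i)" using assms by simp
    then show "x i * (\<Sum>j<n. A $$ (i, j) * x j) = \<mu> * (x i)^2"
      by (simp add: power2_eq_square algebra_simps)
  qed
  finally show ?thesis by (simp add: sum_distrib_left)
qed

lemma eigen_le_gap:
  assumes eigen: "\<And>i. i < n \<Longrightarrow> (\<Sum>j<n. A $$ (i, j) * x j) = \<mu> * x i"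
    and "\<mu> \<noteq> d" "i0 < n" "x i0 \<noteq> 0"
  shows "\<mu> \<le> \<theta>"
proof -
  have "d * (\<Sum>j<n. x j) = \<mu> * (\<Sum>j<n. x j)"
    using sum_mult_column[of x] by (simp add: eigen sum_distrib_left)
  then have sum_zero: "(\<Sum>j<n. x j) = 0" using \<open>\<mu> \<noteq> d\<close> by simp
  have "\<mu> * (\<Sum>i<n. (x i)^2) \<le> \<theta> * (\<Sum>i<n. (x i)^2)"
    using gap[OF sum_zero] quadratic_eigen[OF eigen] by linarith
  moreover have "0 < (\<Sum>i<n. (x i)^2)"
    using assms by (intro sum_pos2[of _ i0]) auto
  ultimately show ?thesis by simp
qed

lemma eigen_top_const:
  assumes eigen: "\<And>i. i < n \<Longrightarrow> (\<Sum>j<n. A $$ (i, j) * x j) = d * x i" and "k < n"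
  shows "x k = x 0"
proof -
  define c where "c = (\<Sum>j<n. x j) / n"
  define y where "y i = x i - c" for i
  have eigen_y: "(\<Sum>j<n. A $$ (i, j) * y j) = d * y i" if "i < n" for i
  proof -
    have "(\<Sum>j<n. A $$ (i, j) * y j) = (\<Sum>j<n. A $$ (i, j) * x j) - c * (\<Sum>j<n. A $$ (i, j))"
      by (simp add: y_def algebra_simps sum_subtractf sum_distrib_left)
    then show ?thesis using eigen[OF that] row_sum[OF that] by (simp add: y_def algebra_simps)
  qed
  have sum_zero: "(\<Sum>j<n. y j) = 0" unfolding y_def c_def using nonempty by (simp add: sum_subtractf)
  have "d * (\<Sum>i<n. (y i)^2) \<le> \<theta> * (\<Sum>i<n. (y i)^2)"
    using gap[OF sum_zero] quadratic_eigen[OF eigen_y] by linarith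
  then have "(d - \<theta>) * (\<Sum>i<n. (y i)^2) \<le> 0" by (simp add: algebra_simps)
  then have "(\<Sum>i<n. (y i)^2) \<le> 0" using gap_less by (simp add: mult_le_0_iff)
  moreover have "0 \<le> (\<Sum>i<n. (y i)^2)" by (intro sum_nonneg) simp
  ultimately have "(\<Sum>i<n. (y i)^2) = 0" by simp
  then have "\<And>i. i < n \<Longrightarrow> x i = c" by (simp add: y_def sum_nonneg_eq_0_iff)
  then show ?thesis using \<open>k < n\<close> nonempty by metis
qed

lemma char_poly_root_cases:
  assumes "poly (char_poly A) \<mu> = 0"
  shows "\<mu> = d \<or> \<mu> \<le> \<theta>"
proof -
  obtain x i0 where "i0 < n" "x i0 \<noteq> 0" "\<And>i. i < n \<Longrightarrow> (\<Sum>j<n. A $$ (i, j) * x j) = \<mu> * x i"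
    using char_poly_root_eigenfunction[OF carrier assms] by blast
  then show ?thesis using eigen_le_gap by blast
qed

text \<open>A \<open>d\<close>-eigenvector of the deflated matrix lifts to an eigenvector of \<open>A\<close> vanishing at \<open>0\<close>,
  which is impossible since the \<open>d\<close>-eigenvectors of \<open>A\<close> are constant.\<close>
lemma order_char_poly_top_le_1: "order d (char_poly A) \<le> 1"
proof -
  let ?B = "row_sum_deflation A"
  have B: "?B \<in> carrier_mat (n - 1) (n - 1)" using carrier by (simp add: row_sum_deflation_def)
  have "poly (char_poly ?B) d \<noteq> 0"
  proof
    assume "poly (char_poly ?B) d = 0"
    then obtain w b0 where w: "b0 < n - 1" "w b0 \<noteq> 0"
      and eigen_w: "\<And>a. a < n - 1 \<Longrightarrow> (\<Sum>b<n - 1. ?B $$ (a, b) * w b) = d * w a"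
      using char_poly_root_eigenfunction[OF B] by blast
    define z where "z i = (if i = 0 then 0 else w (i - 1))" for i
    define s where "s = (\<Sum>j<n. A $$ (0, j) * z j)"
    have lift: "(\<Sum>j<n. A $$ (i, j) * z j) = d * z i + s" if "i < n" for i
      unfolding s_def using eigen_w that
      by (intro row_sum_deflation_eigen_lift[OF carrier]) (simp_all add: z_def)
    have "d * (\<Sum>j<n. z j) = d * (\<Sum>j<n. z j) + n * s"
      using sum_mult_column[of z] lift by (simp add: sum.distrib sum_distrib_left)
    then have "s = 0" using nonempty by simp
    then have "z (Suc b0) = z 0" using lift w by (intro eigen_top_const) simp_all
    with w show False by (simp add: z_def)
  qed
  then have order_B: "order d (char_poly ?B) = 0" by (simp add: order_root)
  have "[:-d, 1:] * char_poly ?B \<noteq> 0"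
    using char_poly_nonzero[OF B] by (intro no_zero_divisors) simp_all
  then have "order d (char_poly A) = order d [:-d, 1:] + order d (char_poly ?B)"
    using order_mult char_poly_row_sum_deflation[OF carrier nonempty row_sum] by metis
  then show ?thesis using order_B order_power_n_n[of d 1] by simp
qed

end

lemma sorted_eigenvalues_desc: "sorted_wrt (\<ge>) (eigenvalues_desc A)"
  by (simp add: eigenvalues_desc_def sorted_wrt_rev)

lemma mset_eigenvalues_desc: "mset (eigenvalues_desc A) = proots (char_poly A)"
  by (simp add: eigenvalues_desc_def)

lemma set_eigenvalues_desc:
  assumes "A \<in> carrier_mat n n"
  shows "set (eigenvalues_desc A) = {x. poly (char_poly A) x = 0}"
proof -
  have "set (eigenvalues_desc A) = set_mset (proots (char_poly A))"
    by (simp flip: mset_eigenvalues_desc)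
  then show ?thesis using char_poly_nonzero[OF assms] by simp
qed

lemma sorted_desc_nth_pos:
  fixes xs :: "'a::{linorder, zero} list"
  assumes sorted: "sorted_wrt (\<ge>) xs" and i: "i < length (filter (\<lambda>x. 0 < x) xs)"
  shows "0 < xs ! i"
proof (rule ccontr)
  assume nonpos: "\<not> 0 < xs ! i"
  have "j < i" if "j < length xs" "0 < xs ! j" for j
    using sorted_wrt_nth_less[OF sorted, of i j] nonpos that by (cases "i \<le> j") (auto simp: le_less)
  then have "{j. j < length xs \<and> 0 < xs ! j} \<subseteq> {..<i}" by blast
  then have "card {j. j < length xs \<and> 0 < xs ! j} \<le> card {..<i}" by (intro card_mono) simp_all
  with i show False by (simp add: length_filter_conv_card)
qed

context spectral_gap_mat
begin

lemma eigenvalues_desc_cases: "x \<in> set (eigenvalues_desc A) \<Longrightarrow> x = d \<or> x \<le> \<theta>"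
  using char_poly_root_cases by (simp add: set_eigenvalues_desc[OF carrier])

lemma eigenvalues_desc_le_top: "i < length (eigenvalues_desc A) \<Longrightarrow> eigenvalues_desc A ! i \<le> d"
  using eigenvalues_desc_cases[OF nth_mem] gap_less by force

lemma eigenvalues_desc_le_gap:
  assumes i: "0 < i" "i < length (eigenvalues_desc A)"
  shows "eigenvalues_desc A ! i \<le> \<theta>"
proof -
  let ?\<mu> = "eigenvalues_desc A"
  have "?\<mu> ! i \<noteq> d"
  proof
    assume top: "?\<mu> ! i = d"
    moreover have "?\<mu> ! i \<le> ?\<mu> ! 0" using sorted_wrt_nth_less[OF sorted_eigenvalues_desc] i by simp
    moreover have "?\<mu> ! 0 \<le> d" using eigenvalues_desc_le_top[of 0] i by linarith
    ultimately have "?\<mu> ! 0 = d" by simp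
    with top have "{0, i} \<subseteq> {j. j < length ?\<mu> \<and> d = ?\<mu> ! j}" using i by auto
    then have "card {0, i} \<le> length (filter ((=) d) ?\<mu>)"
      unfolding length_filter_conv_card by (intro card_mono) simp_all
    also have "\<dots> = order d (char_poly A)"
      using char_poly_nonzero[OF carrier]
      by (simp flip: count_mset count_list_eq_length_filter add: mset_eigenvalues_desc)
    finally show False using order_char_poly_top_le_1 i by simp
  qed
  then show ?thesis using eigenvalues_desc_cases[OF nth_mem[OF i(2)]] by simp
qed

lemma sum_square_top_eigenvalues_le:
  assumes l: "l \<le> length (filter (\<lambda>x. x > 0) (eigenvalues_desc A))" "l \<le> w" and "1 \<le> w"
  shows "(\<Sum>i<l. (eigenvalues_desc A ! i)^2) \<le> d^2 + (real w - 1) * \<theta>^2"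
proof (cases l)
  case 0
  then show ?thesis using \<open>1 \<le> w\<close> by simp
next
  case (Suc l')
  let ?\<mu> = "eigenvalues_desc A"
  have len: "l \<le> length ?\<mu>" using l(1) length_filter_le[of "\<lambda>x. x > 0" ?\<mu>] by linarith
  have pos: "0 < ?\<mu> ! i" if "i < l" for i
    using sorted_desc_nth_pos[OF sorted_eigenvalues_desc] l(1) that by simp
  have first: "(?\<mu> ! 0)^2 \<le> d^2"
  proof (rule power_mono)
    show "?\<mu> ! 0 \<le> d" using eigenvalues_desc_le_top[of 0] Suc len by linarith
  qed (use pos[of 0] Suc in simp)
  have rest: "(?\<mu> ! Suc i)^2 \<le> \<theta>^2" if "i < l'" for i
    using pos[of "Suc i"] eigenvalues_desc_le_gap[of "Suc i"] Suc len that
    by (intro power_mono) simp_all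
  have "(\<Sum>i<l. (?\<mu> ! i)^2) = (?\<mu> ! 0)^2 + (\<Sum>i<l'. (?\<mu> ! Suc i)^2)"
    unfolding Suc by (rule sum.lessThan_Suc_shift)
  also have "\<dots> \<le> d^2 + (\<Sum>i<l'. \<theta>^2)"
    using first rest by (intro add_mono sum_mono) simp_all
  also have "\<dots> \<le> d^2 + (real w - 1) * \<theta>^2"
    using l(2) Suc by (simp add: mult_right_mono)
  finally show ?thesis .
qed

end

lemma adj_matrix_enumeration:
  assumes "finite V"
  obtains vs where "bij_betw ((!) vs) {..<card V} V"
    "adj_matrix V E = mat (card V) (card V) (\<lambda>(i, j). if E (vs ! i) (vs ! j) then 1 else 0)"
proof -
  define vs where "vs = (SOME vs. distinct vs \<and> set vs = V)"
  have "\<exists>vs. distinct vs \<and> set vs = V" using finite_distinct_list[OF assms] by metis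
  then have vs: "distinct vs" "set vs = V" unfolding vs_def
    by (metis (mono_tags, lifting) someI_ex)+
  then have "length vs = card V" by (metis distinct_card)
  moreover have "bij_betw ((!) vs) {..<length vs} V"
    using vs by (metis bij_betw_nth)
  ultimately show ?thesis
    using that unfolding adj_matrix_def Let_def vs_def[symmetric] by metis
qed

lemma adj_matrix_quadratic_form:
  assumes bij: "bij_betw ((!) vs) {..<card V} V"
    and A: "adj_matrix V E = mat (card V) (card V) (\<lambda>(i, j). if E (vs ! i) (vs ! j) then 1 else 0)"
  shows "(\<Sum>i<card V. \<Sum>j<card V. adj_matrix V E $$ (i, j) * f (vs ! i) * f (vs ! j)) = adj_form V E f"
proof -
  have "(\<Sum>i<card V. \<Sum>j<card V. adj_matrix V E $$ (i, j) * f (vs ! i) * f (vs ! j))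
          = (\<Sum>i<card V. \<Sum>j<card V. if E (vs ! i) (vs ! j) then f (vs ! i) * f (vs ! j) else 0)"
    by (intro sum.cong refl) (simp add: A)
  also have "\<dots> = (\<Sum>i<card V. \<Sum>y\<in>V. if E (vs ! i) y then f (vs ! i) * f y else 0)"
    by (intro sum.cong refl) (rule sum.reindex_bij_betw[OF bij])
  also have "\<dots> = adj_form V E f" unfolding adj_form_def by (rule sum.reindex_bij_betw[OF bij])
  finally show ?thesis .
qed

lemma adj_matrix_spectral_gap:
  fixes V :: "'a set" and d :: nat
  assumes V: "finite V" "V \<noteq> {}"
    and sym: "\<And>x y. x \<in> V \<Longrightarrow> y \<in> V \<Longrightarrow> E x y = E y x"
    and regular: "\<And>x. x \<in> V \<Longrightarrow> card {y \<in> V. E x y} = d"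
    and gap: "\<And>f. (\<Sum>x\<in>V. f x) = 0 \<Longrightarrow> adj_form V E f \<le> \<theta> * (\<Sum>x\<in>V. (f x)^2)"
    and "\<theta> < d"
  shows "spectral_gap_mat (adj_matrix V E) (card V) d \<theta>"
proof -
  let ?n = "card V"
  obtain vs where bij: "bij_betw ((!) vs) {..<?n} V"
    and A: "adj_matrix V E = mat ?n ?n (\<lambda>(i, j). if E (vs ! i) (vs ! j) then 1 else 0)"
    using adj_matrix_enumeration[OF V(1)] by blast
  have reindex: "(\<Sum>i<?n. g (vs ! i)) = (\<Sum>x\<in>V. g x)" for g :: "'a \<Rightarrow> real"
    by (rule sum.reindex_bij_betw[OF bij])
  have vs_in: "vs ! i \<in> V" if "i < ?n" for i using bij that by (simp add: bij_betw_apply)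
  show ?thesis
  proof
    show "adj_matrix V E \<in> carrier_mat ?n ?n" "0 < ?n" using A V by (simp_all add: card_gt_0_iff)
    show "\<theta> < d" using \<open>\<theta> < d\<close> .
  next
    fix i j assume "i < ?n" "j < ?n"
    then show "adj_matrix V E $$ (i, j) = adj_matrix V E $$ (j, i)"
      unfolding A using sym[OF vs_in vs_in] by simp
  next
    fix i assume i: "i < ?n"
    have "(\<Sum>j<?n. adj_matrix V E $$ (i, j)) = (\<Sum>j<?n. (\<lambda>y. if E (vs ! i) y then 1 else 0) (vs ! j))"
      unfolding A using i by (intro sum.cong refl) simp
    also have "\<dots> = (\<Sum>y\<in>V. if E (vs ! i) y then 1 else 0)" by (rule reindex)
    also have "\<dots> = d" using regular[OF vs_in[OF i]] V(1) by (simp add: sum.If_cases Int_def)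
    finally show "(\<Sum>j<?n. adj_matrix V E $$ (i, j)) = d" .
  next
    fix x :: "nat \<Rightarrow> real" assume x: "(\<Sum>i<?n. x i) = 0"
    define f where "f y = x (the_inv_into {..<?n} ((!) vs) y)" for y
    have x_f: "x i = f (vs ! i)" if "i < ?n" for i
      unfolding f_def using bij that by (simp add: bij_betw_def the_inv_into_f_f)
    have "(\<Sum>i<?n. \<Sum>j<?n. adj_matrix V E $$ (i, j) * x i * x j) = adj_form V E f"
      using adj_matrix_quadratic_form[OF bij A] by (simp add: x_f)
    also have "\<dots> \<le> \<theta> * (\<Sum>i<?n. (x i)^2)"
      using gap[of f] x by (simp add: reindex[symmetric] x_f)
    finally show "(\<Sum>i<?n. \<Sum>j<?n. adj_matrix V E $$ (i, j) * x i * x j) \<le> \<theta> * (\<Sum>i<?n. (x i)^2)" .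
  qed
qed

lemma num_edges_regular:
  fixes V :: "'a set" and d :: nat
  assumes V: "finite V"
    and sym: "\<And>x y. x \<in> V \<Longrightarrow> y \<in> V \<Longrightarrow> E x y = E y x"
    and irrefl: "\<And>x. x \<in> V \<Longrightarrow> \<not> E x x"
    and regular: "\<And>x. x \<in> V \<Longrightarrow> card {y \<in> V. E x y} = d"
  shows "2 * num_edges V E = card V * d"
proof -
  define darts where "darts = Sigma V (\<lambda>x. {y \<in> V. E x y})"
  define edge where "edge = (\<lambda>(x :: 'a, y). {x, y})"
  have "card darts = card V * d" unfolding darts_def using V regular by simp
  have edges: "{{x, y} | x y. x \<in> V \<and> y \<in> V \<and> x \<noteq> y \<and> E x y} = edge ` darts"
    using irrefl by (auto simp: darts_def edge_def) metis
  have fibre: "card {z \<in> darts. edge z = e} = 2" if e: "e \<in> edge ` darts" for e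
  proof -
    obtain x y where "(x, y) \<in> darts" and e_xy: "e = {x, y}" using e unfolding edge_def by auto
    then have xy: "x \<in> V" "y \<in> V" "E x y" unfolding darts_def by auto
    then have "x \<noteq> y" using irrefl by blast
    then have card_2: "card {(x, y), (y, x)} = 2" by simp
    have "{z \<in> darts. edge z = e} = {(x, y), (y, x)}"
    proof (intro equalityI subsetI)
      fix z assume "z \<in> {z \<in> darts. edge z = e}"
      then show "z \<in> {(x, y), (y, x)}" using e_xy
        by (cases z) (auto simp: edge_def doubleton_eq_iff)
    next
      fix z assume "z \<in> {(x, y), (y, x)}"
      then show "z \<in> {z \<in> darts. edge z = e}"
        using xy sym[OF xy(1,2)] e_xy by (auto simp: darts_def edge_def insert_commute)
    qed
    then show ?thesis using card_2 by (simp only:)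
  qed
  have "finite darts" unfolding darts_def using V by simp
  then have "card darts = (\<Sum>e\<in>edge ` darts. card {z \<in> darts. edge z = e})"
    using sum.image_gen[of darts "\<lambda>_. 1 :: nat" edge] by simp
  also have "\<dots> = 2 * card (edge ` darts)" using fibre by simp
  finally show ?thesis
    using \<open>card darts = card V * d\<close> unfolding num_edges_def edges by simp
qed

section \<open>Cliques of \<open>J(p,k)\<close>\<close>

lemma johnson_clique_lower:
  assumes "1 \<le> k" "k \<le> p"
  shows "is_clique (johnson_vertices p k) (johnson_adj k) ((\<lambda>x. insert x {0..<k - 1}) ` {k - 1..<p})"
    and "card ((\<lambda>x. insert x {0..<k - 1}) ` {k - 1..<p}) = p - k + 1"
proof -
  have "inj_on (\<lambda>x. insert x {0..<k - 1}) {k - 1..<p}"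
    by (rule inj_onI) (metis atLeastLessThan_iff insertE insertI1 not_less)
  then show "card ((\<lambda>x. insert x {0..<k - 1}) ` {k - 1..<p}) = p - k + 1"
    using assms by (simp add: card_image)
  show "is_clique (johnson_vertices p k) (johnson_adj k) ((\<lambda>x. insert x {0..<k - 1}) ` {k - 1..<p})"
    unfolding is_clique_def
  proof (intro conjI ballI impI)
    show "(\<lambda>x. insert x {0..<k - 1}) ` {k - 1..<p} \<subseteq> johnson_vertices p k"
      using assms by (auto simp: mem_johnson_vertices)
  next
    fix X Y assume X: "X \<in> (\<lambda>x. insert x {0..<k - 1}) ` {k - 1..<p}"
      and Y: "Y \<in> (\<lambda>x. insert x {0..<k - 1}) ` {k - 1..<p}" and "X \<noteq> Y"
    obtain x where x: "X = insert x {0..<k - 1}" "k - 1 \<le> x" using X by auto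
    obtain y where y: "Y = insert y {0..<k - 1}" "k - 1 \<le> y" using Y by auto
    have "x \<noteq> y" using x y \<open>X \<noteq> Y\<close> by blast
    with x y have "X \<inter> Y = {0..<k - 1}" by auto
    then show "johnson_adj k X Y" by (simp add: johnson_adj_def)
  qed
qed

lemma card_johnson_family_through_le:
  assumes C: "C \<subseteq> johnson_vertices p k" and I: "I \<subseteq> {0..<p}" "card I + 1 = k"
    and through: "\<And>X. X \<in> C \<Longrightarrow> I \<subseteq> X"
  shows "card C \<le> p - k + 1"
proof -
  have fin_I: "finite I" using I(1) finite_subset by blast
  have single: "X - I = {the_elem (X - I)}" if "X \<in> C" for X
  proof -
    have "card (X - I) = 1"
      using that C through[OF that] I fin_I by (auto simp: card_Diff_subset mem_johnson_vertices)
    then show ?thesis by (metis card_1_singletonE the_elem_eq)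
  qed
  have "inj_on (\<lambda>X. the_elem (X - I)) C"
  proof (rule inj_onI)
    fix X Y assume "X \<in> C" "Y \<in> C" "the_elem (X - I) = the_elem (Y - I)"
    then have "I \<union> (X - I) = I \<union> (Y - I)" using single by metis
    then show "X = Y" using through \<open>X \<in> C\<close> \<open>Y \<in> C\<close> by (metis Un_Diff_cancel sup.absorb2)
  qed
  moreover have "(\<lambda>X. the_elem (X - I)) ` C \<subseteq> {0..<p} - I"
    using single C by (fastforce simp: mem_johnson_vertices)
  ultimately have "card C \<le> card ({0..<p} - I)"
    by (metis card_inj_on_le finite_Diff finite_atLeastLessThan)
  then show ?thesis using I fin_I by (simp add: card_Diff_subset)
qed

context
  fixes p k :: nat and C :: "nat set set" and S T :: "nat set"
  assumes clique: "is_clique (johnson_vertices p k) (johnson_adj k) C"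
    and S: "S \<in> C" and T: "T \<in> C" and "S \<noteq> T"
begin

lemma johnson_clique_member_cases:
  assumes X: "X \<in> C"
  shows "S \<inter> T \<subseteq> X \<or> X \<subseteq> S \<union> T"
proof (cases "X = S \<or> X = T \<or> S \<inter> T \<subseteq> X")
  case False
  have XV: "X \<in> johnson_vertices p k" and fin_X: "finite X" and fin_S: "finite S"
    using X S clique finite_of_mem_johnson_vertices unfolding is_clique_def by blast+
  have "card (X \<inter> S) = k - 1" "card (X \<inter> T) = k - 1" "card (S \<inter> T) = k - 1"
    using X S T False \<open>S \<noteq> T\<close> clique unfolding is_clique_def johnson_adj_def by auto
  moreover have "card (X \<inter> (S \<inter> T)) < card (S \<inter> T)"
    using False fin_S by (intro psubset_card_mono) auto
  moreover have "card (X \<inter> (S \<union> T)) + card (X \<inter> (S \<inter> T)) = card (X \<inter> S) + card (X \<inter> T)"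
    using card_Un_Int[of "X \<inter> S" "X \<inter> T"] fin_X by (simp add: Int_Un_distrib Int_ac)
  moreover have "card (X \<inter> (S \<union> T)) \<le> card X" using fin_X by (intro card_mono) auto
  ultimately have "card (X \<inter> (S \<union> T)) = card X" using XV by (simp add: mem_johnson_vertices)
  then have "X \<inter> (S \<union> T) = X" using fin_X by (intro card_subset_eq) auto
  then show ?thesis by auto
qed auto

text \<open>Members not through \<open>S \<inter> T\<close> lie inside \<open>S \<union> T\<close>; a member through \<open>S \<inter> T\<close> but not inside
  \<open>S \<union> T\<close> would meet such a member in at most \<open>k - 2\<close> points.\<close>
lemma johnson_clique_through_or_inside: "(\<forall>X\<in>C. S \<inter> T \<subseteq> X) \<or> (\<forall>X\<in>C. X \<subseteq> S \<union> T)"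
proof (rule ccontr)
  assume "\<not> ?thesis"
  then obtain X Y where X: "X \<in> C" "\<not> X \<subseteq> S \<union> T" and Y: "Y \<in> C" "\<not> S \<inter> T \<subseteq> Y" by blast
  have through: "S \<inter> T \<subseteq> X" and inside: "Y \<subseteq> S \<union> T"
    using johnson_clique_member_cases X Y by blast+
  obtain x where x: "x \<in> X" "x \<notin> S \<union> T" using X by blast
  obtain y where y: "y \<in> S \<inter> T" "y \<notin> Y" using Y by blast
  have SV: "S \<in> johnson_vertices p k" and XV: "X \<in> johnson_vertices p k"
    using S X clique unfolding is_clique_def by blast+
  have fin: "finite S" "finite X" using SV XV finite_of_mem_johnson_vertices by blast+
  have card_ST: "card (S \<inter> T) = k - 1"
    using S T \<open>S \<noteq> T\<close> clique unfolding is_clique_def johnson_adj_def by blast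
  have "0 < card (S \<inter> T)" using y fin by (auto simp: card_gt_0_iff)
  have "insert x (S \<inter> T) \<subseteq> X" using through x by blast
  moreover have "card (insert x (S \<inter> T)) = card X"
    using x card_ST fin XV \<open>0 < card (S \<inter> T)\<close> by (auto simp: mem_johnson_vertices)
  ultimately have "X = insert x (S \<inter> T)" using fin by (intro card_subset_eq[symmetric]) auto
  then have "X \<inter> Y \<subseteq> (S \<inter> T) - {y}" using x y inside by blast
  then have "card (X \<inter> Y) \<le> card (S \<inter> T) - 1" using fin y
    by (metis card_Diff_singleton card_mono finite_Diff finite_Int)
  moreover have "X \<noteq> Y" using X(2) inside by blast
  then have "card (X \<inter> Y) = k - 1" using X Y clique unfolding is_clique_def johnson_adj_def by blast
  ultimately show False using card_ST \<open>0 < card (S \<inter> T)\<close> by linarith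
qed

end

lemma johnson_clique_upper:
  assumes k: "1 \<le> k" "2 * k \<le> p" and clique: "is_clique (johnson_vertices p k) (johnson_adj k) C"
  shows "card C \<le> p - k + 1"
proof (cases "\<exists>S\<in>C. \<exists>T\<in>C. S \<noteq> T")
  case True
  then obtain S T where ST: "S \<in> C" "T \<in> C" "S \<noteq> T" by blast
  have C: "C \<subseteq> johnson_vertices p k" using clique by (simp add: is_clique_def)
  then have SV: "S \<in> johnson_vertices p k" "T \<in> johnson_vertices p k" using ST by blast+
  have fin: "finite S" "finite T" using SV finite_of_mem_johnson_vertices by blast+
  have card_ST: "card (S \<inter> T) = k - 1"
    using ST clique unfolding is_clique_def johnson_adj_def by blast
  show ?thesis
    using johnson_clique_through_or_inside[OF clique ST]
  proof
    assume "\<forall>X\<in>C. S \<inter> T \<subseteq> X"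
    then show ?thesis
      using card_johnson_family_through_le[OF C, of "S \<inter> T"] SV card_ST k
      by (auto simp: mem_johnson_vertices)
  next
    assume inside: "\<forall>X\<in>C. X \<subseteq> S \<union> T"
    have "card (S \<union> T) = k + 1"
      using card_Un_Int[OF fin] card_ST SV k by (simp add: mem_johnson_vertices)
    moreover have "C \<subseteq> {X. X \<subseteq> S \<union> T \<and> card X = k}"
      using inside C by (auto simp: mem_johnson_vertices)
    ultimately have "card C \<le> (k + 1) choose k"
      using fin card_mono[of "{X. X \<subseteq> S \<union> T \<and> card X = k}" C] by (simp add: n_subsets)
    then show ?thesis using k by (simp add: binomial_Suc_n[of k, simplified])
  qed
next
  case False
  have "finite C"
    using clique finite_subset[of C "johnson_vertices p k"] by (simp add: is_clique_def)
  then have "card C \<le> 1" using False card_le_Suc0_iff_eq by auto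
  then show ?thesis by simp
qed

lemma clique_number_johnson:
  assumes "1 \<le> k" "2 * k \<le> p"
  shows "clique_number (johnson_vertices p k) (johnson_adj k) = p - k + 1"
  unfolding clique_number_def
proof (rule Max_eqI)
  show "finite (card ` {C. is_clique (johnson_vertices p k) (johnson_adj k) C})"
    by (rule finite_imageI, rule finite_subset[of _ "Pow (johnson_vertices p k)"])
       (auto simp: is_clique_def)
  show "p - k + 1 \<in> card ` {C. is_clique (johnson_vertices p k) (johnson_adj k) C}"
    using johnson_clique_lower[of k p] assms by force
qed (use johnson_clique_upper[OF assms] in auto)

section \<open>Binomial estimates\<close>

lemma of_nat_choose_2: "real (n choose 2) = real n * (real n - 1) / 2"
proof -
  have "real (n choose 2) * fact 2 = (\<Prod>i = 0..<2. real n - of_nat i)"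
    unfolding binomial_gbinomial by (rule gbinomial_mult_fact')
  then show ?thesis by (simp add: eval_nat_numeral prod.atLeast0_lessThan_Suc)
qed

lemma of_nat_choose_3: "real (n choose 3) = real n * (real n - 1) * (real n - 2) / 6"
proof -
  have "real (n choose 3) * fact 3 = (\<Prod>i = 0..<3. real n - of_nat i)"
    unfolding binomial_gbinomial by (rule gbinomial_mult_fact')
  then show ?thesis by (simp add: eval_nat_numeral prod.atLeast0_lessThan_Suc fact_numeral)
qed

text \<open>After substituting \<open>k = 3 + a\<close>, \<open>q = 3 + a + b\<close> the difference of the two sides is a polynomial
  in \<open>a, b\<close> with nonnegative coefficients.\<close>
lemma quintic_estimate:
  fixes k q :: real
  assumes "3 \<le> k" "k \<le> q"
  shows "6 * ((q + 1) * (k^2 * q + (k * q - k - q)^2)) \<le> (k + q) * (k + q - 1) * (k + q - 2) * k * q"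
proof -
  define a b where "a = k - 3" and "b = q - k"
  then have ab: "0 \<le> a" "0 \<le> b" "k = 3 + a" "q = 3 + a + b" using assms by simp_all
  have "(k + q) * (k + q - 1) * (k + q - 2) * k * q - 6 * ((q + 1) * (k^2 * q + (k * q - k - q)^2))
     = 216 + 306*b + 135*b^2 + 30*b^3 + 3*b^4 + 612*a + 444*a*b + 110*a*b^2 + 15*a*b^3 + a*b^4
       + 498*a^2 + 204*a^2*b + 21*a^2*b^2 + a^2*b^3 + 178*a^3 + 36*a^3*b + 30*a^4 + 2*a^4*b + 2*a^5"
    unfolding ab(3,4)
    by (simp add: algebra_simps power2_eq_square power3_eq_cube power4_eq_xxxx power_def)
  moreover have "0 \<le> 216 + 306*b + 135*b^2 + 30*b^3 + 3*b^4 + 612*a + 444*a*b + 110*a*b^2 + 15*a*b^3 + a*b^4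
       + 498*a^2 + 204*a^2*b + 21*a^2*b^2 + a^2*b^3 + 178*a^3 + 36*a^3*b + 30*a^4 + 2*a^4*b + 2*a^5"
    using ab by (intro add_nonneg_nonneg mult_nonneg_nonneg zero_le_power) auto
  ultimately show ?thesis by linarith
qed

lemma binomial_lower_bound:
  fixes k q :: nat
  assumes "2 \<le> k" "k \<le> q"
  shows "(real q + 1) * (real k^2 * real q + (real k * real q - real k - real q)^2)
           \<le> real ((q + k) choose k) * real k * real q"
proof (cases "k = 2")
  case True
  then have "real ((q + k) choose k) = (real q + 2) * (real q + 1) / 2"
    using of_nat_choose_2[of "q + 2"] by (simp add: algebra_simps)
  moreover have "(real q + 1) * (real q^2 + 4) \<le> (real q + 1) * (real q^2 + 2 * real q)"
    using assms True by (intro mult_left_mono) auto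
  ultimately show ?thesis using True by (simp add: algebra_simps power2_eq_square)
next
  case False
  then have "3 \<le> k" using assms by simp
  have "6 * ((real q + 1) * (real k^2 * real q + (real k * real q - real k - real q)^2))
          \<le> (real k + real q) * (real k + real q - 1) * (real k + real q - 2) * real k * real q"
    by (rule quintic_estimate) (use \<open>3 \<le> k\<close> assms in simp_all)
  also have "\<dots> = 6 * real ((q + k) choose 3) * real k * real q"
    by (simp add: of_nat_choose_3 add.commute)
  also have "\<dots> \<le> 6 * (real ((q + k) choose k) * real k * real q)"
    using \<open>3 \<le> k\<close> assms by (simp add: binomial_mono mult_right_mono)
  finally show ?thesis by linarith
qed

lemma johnson_binomial_estimate:
  fixes p k :: nat
  assumes "2 \<le> k" "2 * k \<le> p"
  shows "(real (k * (p - k)))^2 + real (p - k) * (real (k * (p - k)) - real p)^2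
           \<le> real ((p choose k) * (k * (p - k))) * real (p - k) / real (p - k + 1)"
proof -
  define q where "q = p - k"
  have p: "p = q + k" and "k \<le> q" using assms by (simp_all add: q_def)
  have "((real (k * q))^2 + real q * (real (k * q) - real p)^2) * (real q + 1)
          = real q * ((real q + 1) * (real k^2 * real q + (real k * real q - real k - real q)^2))"
    unfolding p by (simp add: algebra_simps power2_eq_square)
  also have "\<dots> \<le> real q * (real (p choose k) * real k * real q)"
    using binomial_lower_bound[OF assms(1) \<open>k \<le> q\<close>] unfolding p by (intro mult_left_mono) auto
  finally show ?thesis unfolding q_def[symmetric]
    by (simp add: pos_le_divide_eq add_pos_nonneg algebra_simps)
qed

lemma johnson_spectral_gap:
  assumes "1 \<le> k" "k \<le> p"
  shows "spectral_gap_mat (adj_matrix (johnson_vertices p k) (johnson_adj k)) (p choose k)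
           (k * (p - k)) (real (k * (p - k)) - real p)"
proof -
  let ?V = "johnson_vertices p k"
  have E: "johnson_adj k = johnson_edge k" using assms(1) by (rule johnson_adj_eq_johnson_edge)
  have "spectral_gap_mat (adj_matrix ?V (johnson_adj k)) (card ?V)
          (k * (p - k)) (real (k * (p - k)) - real p)"
  proof (rule adj_matrix_spectral_gap)
    show "?V \<noteq> {}" using assms card_johnson_vertices[of p k] by fastforce
    show "johnson_adj k S T = johnson_adj k T S" for S T by (simp add: johnson_adj_def Int_commute)
    show "card {T \<in> ?V. johnson_adj k S T} = k * (p - k)" if "S \<in> ?V" for S
      unfolding E using that assms by (rule card_johnson_neighbours)
    show "adj_form ?V (johnson_adj k) f \<le> (real (k * (p - k)) - real p) * (\<Sum>S\<in>?V. (f S)^2)"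
      if "(\<Sum>S\<in>?V. f S) = 0" for f
      using adj_form_johnson_le[OF assms(2) that] assms by (simp add: E)
  qed (use assms in simp_all)
  then show ?thesis by (simp add: card_johnson_vertices)
qed

lemma num_edges_johnson:
  assumes "1 \<le> k" "k \<le> p"
  shows "2 * num_edges (johnson_vertices p k) (johnson_adj k) = (p choose k) * (k * (p - k))"
proof -
  have E: "johnson_adj k = johnson_edge k" using assms(1) by (rule johnson_adj_eq_johnson_edge)
  have "2 * num_edges (johnson_vertices p k) (johnson_edge k)
          = card (johnson_vertices p k) * (k * (p - k))"
  proof (rule num_edges_regular)
    show "johnson_edge k S T = johnson_edge k T S" for S T
      by (simp add: johnson_edge_def Int_commute)
    show "card {T \<in> johnson_vertices p k. johnson_edge k S T} = k * (p - k)"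
      if "S \<in> johnson_vertices p k" for S using that assms by (rule card_johnson_neighbours)
  qed (simp_all add: johnson_edge_irrefl)
  then show ?thesis by (simp add: E card_johnson_vertices)
qed

theorem mainTheorem3:
  fixes p k :: nat
  assumes "k \<ge> 2" and "p \<ge> 2 * k"
  shows
    "let V = johnson_vertices p k; E = johnson_adj k;
         \<mu> = eigenvalues_desc (adj_matrix V E);
         m = num_edges V E;
         \<omega> = clique_number V E;
         npos = length (filter (\<lambda>x. x > 0) \<mu>);
         l = min npos \<omega>
     in (\<Sum>i<l. (\<mu> ! i)^2) \<le> 2 * real m * (real \<omega> - 1) / real \<omega>"
proof -
  let ?V = "johnson_vertices p k" and ?E = "johnson_adj k" and ?d = "k * (p - k)"
  have k: "1 \<le> k" "k \<le> p" using assms by simp_all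
  interpret spectral_gap_mat "adj_matrix ?V ?E" "p choose k" ?d "real ?d - real p"
    using k by (rule johnson_spectral_gap)
  have \<omega>: "clique_number ?V ?E = p - k + 1" using assms by (intro clique_number_johnson) auto
  have m: "2 * real (num_edges ?V ?E) = real ((p choose k) * ?d)"
    using num_edges_johnson[OF k] by (metis of_nat_mult of_nat_numeral)
  let ?\<mu> = "eigenvalues_desc (adj_matrix ?V ?E)"
  let ?l = "min (length (filter (\<lambda>x. x > 0) ?\<mu>)) (p - k + 1)"
  have "(\<Sum>i<?l. (?\<mu> ! i)^2) \<le> (real ?d)^2 + real (p - k) * (real ?d - real p)^2"
    using sum_square_top_eigenvalues_le[of ?l "p - k + 1"] by simp
  also have "\<dots> \<le> 2 * real (num_edges ?V ?E) * real (p - k) / real (p - k + 1)"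
    using johnson_binomial_estimate[OF assms] m by simp
  finally show ?thesis unfolding Let_def \<omega> by simp
qed

end
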